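(* Every second-order polynomial has a description.
   Context: Second-order polynomials are the smallest class of functions $P\colon\mathbb N^{\mathbb N}\times\mathbb N\to\mathbb N$ that contains all $(l,n)\mapsto p(n)$ for polynomials $p$ with natural-number coefficients, and is closed under pointwise sum, pointwise product, and $P\mapsto P^+$ with $P^+(l,n)=l(P(l,n))$. A polynomial tree is a finite rooted tree in which each node is labeled by a polynomial in $\mathbb N[X_0,\ldots,X_k]$, where $k$ is the number of children of that node, and the children of each node are linearly ordered. To each node one recursively assigns a function $\mathbb N^{\mathbb N}\times\mathbb N\to\mathbb N$: a leaf labeled $t\in\mathbb N[X_0]$ gets $(l,n)\mapsto t(n)$; a node labeled $t$ whose children (in order) were assigned $P_1,\ldots,P_k$ gets $(l,n)\mapsto t(n,l(P_1(l,n)),\ldots,l(P_k(l,n)))$. A polynomial tree is a description of $P$ if $P$ is assigned to its root. *)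

theory Defs
  imports "HOL-Computational_Algebra.Polynomial" "HOL-Library.Poly_Mapping"
begin

text \<open>Multivariate polynomials with natural-number coefficients in variables X_0, X_1, ...,
  represented as finitely supported maps from monomials (exponent vectors) to coefficients.\<close>
type_synonym mpoly_nat = "(nat \<Rightarrow>\<^sub>0 nat) \<Rightarrow>\<^sub>0 nat"

definition mpoly_eval :: "mpoly_nat \<Rightarrow> (nat \<Rightarrow> nat) \<Rightarrow> nat" where
  "mpoly_eval p v = (\<Sum>m\<in>Poly_Mapping.keys p. Poly_Mapping.lookup p m * (\<Prod>i\<in>Poly_Mapping.keys m. v i ^ Poly_Mapping.lookup m i))"

definition mpoly_vars :: "mpoly_nat \<Rightarrow> nat set" where
  "mpoly_vars p = \<Union> (Poly_Mapping.keys ` Poly_Mapping.keys p)"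

inductive_set SOP :: "((nat \<Rightarrow> nat) \<Rightarrow> nat \<Rightarrow> nat) set" where
  const: "(\<lambda>l n. poly p n) \<in> SOP"
| add: "P \<in> SOP \<Longrightarrow> Q \<in> SOP \<Longrightarrow> (\<lambda>l n. P l n + Q l n) \<in> SOP"
| mult: "P \<in> SOP \<Longrightarrow> Q \<in> SOP \<Longrightarrow> (\<lambda>l n. P l n * Q l n) \<in> SOP"
| lift: "P \<in> SOP \<Longrightarrow> (\<lambda>l n. l (P l n)) \<in> SOP"

datatype ptree = PNode mpoly_nat "ptree list"

fun ptree_wf :: "ptree \<Rightarrow> bool" where
  "ptree_wf (PNode t cs) = (mpoly_vars t \<subseteq> {..length cs} \<and> (\<forall>c\<in>set cs. ptree_wf c))"

text \<open>The function assigned to a node: X_0 is n, X_i is l(P_i(l,n)).\<close>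
fun ptree_sem :: "ptree \<Rightarrow> (nat \<Rightarrow> nat) \<Rightarrow> nat \<Rightarrow> nat" where
  "ptree_sem (PNode t cs) l n =
     mpoly_eval t (\<lambda>i. if i = 0 then n else l (map (\<lambda>c. ptree_sem c l n) cs ! (i - 1)))"

definition is_description :: "ptree \<Rightarrow> ((nat \<Rightarrow> nat) \<Rightarrow> nat \<Rightarrow> nat) \<Rightarrow> bool" where
  "is_description T P \<longleftrightarrow> ptree_wf T \<and> ptree_sem T = P"

end

theory Submission
  imports Defs
begin

text \<open>By induction on second-order polynomials one shows that each of them is a polynomial
  expression in \<open>n\<close> and the values \<open>l (P\<^sub>i l n)\<close> for finitely many described \<open>P\<^sub>i\<close>. Constants
  are such expressions without children and \<open>l (P l n)\<close> is the variable of a single child;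
  for sums and products the two child lists are concatenated, the variables of the second
  expression being shifted past the first list. Finally every polynomial expression is
  normalized to a polynomial with the same variables, which labels the root.\<close>

datatype pexpr = Const nat | Var nat | Add pexpr pexpr | Mul pexpr pexpr

fun pexpr_eval :: "pexpr \<Rightarrow> (nat \<Rightarrow> nat) \<Rightarrow> nat" where
  "pexpr_eval (Const c) v = c"
| "pexpr_eval (Var i) v = v i"
| "pexpr_eval (Add a b) v = pexpr_eval a v + pexpr_eval b v"
| "pexpr_eval (Mul a b) v = pexpr_eval a v * pexpr_eval b v"

fun pexpr_vars :: "pexpr \<Rightarrow> nat set" where
  "pexpr_vars (Const c) = {}"
| "pexpr_vars (Var i) = {i}"
| "pexpr_vars (Add a b) = pexpr_vars a \<union> pexpr_vars b"
| "pexpr_vars (Mul a b) = pexpr_vars a \<union> pexpr_vars b"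

fun pexpr_rename :: "(nat \<Rightarrow> nat) \<Rightarrow> pexpr \<Rightarrow> pexpr" where
  "pexpr_rename g (Const c) = Const c"
| "pexpr_rename g (Var i) = Var (g i)"
| "pexpr_rename g (Add a b) = Add (pexpr_rename g a) (pexpr_rename g b)"
| "pexpr_rename g (Mul a b) = Mul (pexpr_rename g a) (pexpr_rename g b)"

lemma pexpr_eval_cong: "(\<And>i. i \<in> pexpr_vars e \<Longrightarrow> v i = w i) \<Longrightarrow> pexpr_eval e v = pexpr_eval e w"
  by (induction e) auto

lemma pexpr_eval_rename: "pexpr_eval (pexpr_rename g e) v = pexpr_eval e (v \<circ> g)"
  by (induction e) auto

lemma pexpr_vars_rename: "pexpr_vars (pexpr_rename g e) = g ` pexpr_vars e"
  by (induction e) auto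

lemma poly_as_pexpr: "\<exists>e. pexpr_vars e \<subseteq> {0} \<and> (\<forall>v. pexpr_eval e v = poly p (v 0))"
proof (induction p rule: pCons_induct)
  case 0
  show ?case by (intro exI[of _ "Const 0"]) auto
next
  case (pCons a p)
  then obtain e where "pexpr_vars e \<subseteq> {0}" "\<forall>v. pexpr_eval e v = poly p (v 0)" by blast
  then show ?case by (intro exI[of _ "Add (Const a) (Mul (Var 0) e)"]) auto
qed

definition monom_eval :: "(nat \<Rightarrow>\<^sub>0 nat) \<Rightarrow> (nat \<Rightarrow> nat) \<Rightarrow> nat" where
  "monom_eval m v = (\<Prod>i\<in>Poly_Mapping.keys m. v i ^ Poly_Mapping.lookup m i)"

lemma monom_eval_superset:
  "finite S \<Longrightarrow> Poly_Mapping.keys m \<subseteq> S \<Longrightarrow>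
    monom_eval m v = (\<Prod>i\<in>S. v i ^ Poly_Mapping.lookup m i)"
  unfolding monom_eval_def by (rule prod.mono_neutral_left) (auto simp: in_keys_iff)

lemma monom_eval_add: "monom_eval (m1 + m2) v = monom_eval m1 v * monom_eval m2 v"
proof -
  let ?S = "Poly_Mapping.keys m1 \<union> Poly_Mapping.keys m2"
  have "monom_eval (m1 + m2) v = (\<Prod>i\<in>?S. v i ^ Poly_Mapping.lookup (m1 + m2) i)"
    by (rule monom_eval_superset) (simp_all add: keys_add)
  also have "\<dots> = (\<Prod>i\<in>?S. v i ^ Poly_Mapping.lookup m1 i) * (\<Prod>i\<in>?S. v i ^ Poly_Mapping.lookup m2 i)"
    by (simp add: lookup_add power_add prod.distrib)
  also have "\<dots> = monom_eval m1 v * monom_eval m2 v"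
    using monom_eval_superset[of ?S m1 v] monom_eval_superset[of ?S m2 v] by simp
  finally show ?thesis .
qed

lemma mpoly_eval_superset:
  "finite S \<Longrightarrow> Poly_Mapping.keys p \<subseteq> S \<Longrightarrow>
    mpoly_eval p v = (\<Sum>m\<in>S. Poly_Mapping.lookup p m * monom_eval m v)"
  unfolding mpoly_eval_def monom_eval_def[symmetric]
  by (rule sum.mono_neutral_left) (auto simp: in_keys_iff)

lemma mpoly_eval_add: "mpoly_eval (p + q) v = mpoly_eval p v + mpoly_eval q v"
proof -
  let ?S = "Poly_Mapping.keys p \<union> Poly_Mapping.keys q"
  have "mpoly_eval (p + q) v = (\<Sum>m\<in>?S. Poly_Mapping.lookup (p + q) m * monom_eval m v)"
    by (rule mpoly_eval_superset) (simp_all add: keys_add)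
  also have "\<dots> = (\<Sum>m\<in>?S. Poly_Mapping.lookup p m * monom_eval m v)
      + (\<Sum>m\<in>?S. Poly_Mapping.lookup q m * monom_eval m v)"
    by (simp add: lookup_add distrib_right sum.distrib)
  also have "\<dots> = mpoly_eval p v + mpoly_eval q v"
    using mpoly_eval_superset[of ?S p v] mpoly_eval_superset[of ?S q v] by simp
  finally show ?thesis .
qed

lemma mpoly_eval_single: "mpoly_eval (Poly_Mapping.single m c) v = c * monom_eval m v"
  by (simp add: mpoly_eval_def monom_eval_def)

lemma mpoly_vars_add: "mpoly_vars (p + q) \<subseteq> mpoly_vars p \<union> mpoly_vars q"
  unfolding mpoly_vars_def using keys_add[of p q] by blast

lemma mpoly_vars_single: "mpoly_vars (Poly_Mapping.single m c) \<subseteq> Poly_Mapping.keys m"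
  unfolding mpoly_vars_def by auto

text \<open>An unreduced sum of terms \<open>c * m\<close>, kept as a list so that products are plain list
  comprehensions.\<close>
type_synonym term_list = "(nat \<times> (nat \<Rightarrow>\<^sub>0 nat)) list"

definition terms_eval :: "term_list \<Rightarrow> (nat \<Rightarrow> nat) \<Rightarrow> nat" where
  "terms_eval ts v = (\<Sum>(c, m)\<leftarrow>ts. c * monom_eval m v)"

definition terms_vars :: "term_list \<Rightarrow> nat set" where
  "terms_vars ts = (\<Union>(c, m)\<in>set ts. Poly_Mapping.keys m)"

definition terms_mult :: "term_list \<Rightarrow> term_list \<Rightarrow> term_list" where
  "terms_mult ts us = [(c * d, m + k). (c, m) \<leftarrow> ts, (d, k) \<leftarrow> us]"

lemma terms_eval_append: "terms_eval (ts @ us) v = terms_eval ts v + terms_eval us v"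
  by (simp add: terms_eval_def)

lemma terms_eval_mult: "terms_eval (terms_mult ts us) v = terms_eval ts v * terms_eval us v"
proof (induction ts)
  case Nil
  then show ?case by (simp add: terms_eval_def terms_mult_def)
next
  case (Cons t ts)
  obtain c m where t: "t = (c, m)" by force
  have row: "terms_eval [(c * d, m + k). (d, k) \<leftarrow> us] v = c * monom_eval m v * terms_eval us v"
    by (induction us) (auto simp: terms_eval_def monom_eval_add algebra_simps)
  have "terms_mult (t # ts) us = [(c * d, m + k). (d, k) \<leftarrow> us] @ terms_mult ts us"
    by (simp add: terms_mult_def t)
  then show ?case
    using Cons row by (simp add: terms_eval_append t terms_eval_def algebra_simps)
qed

lemma terms_vars_mult: "terms_vars (terms_mult ts us) \<subseteq> terms_vars ts \<union> terms_vars us"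
  unfolding terms_vars_def terms_mult_def using keys_add by fastforce

fun pexpr_terms :: "pexpr \<Rightarrow> term_list" where
  "pexpr_terms (Const c) = [(c, 0)]"
| "pexpr_terms (Var i) = [(1, Poly_Mapping.single i 1)]"
| "pexpr_terms (Add a b) = pexpr_terms a @ pexpr_terms b"
| "pexpr_terms (Mul a b) = terms_mult (pexpr_terms a) (pexpr_terms b)"

lemma terms_eval_pexpr_terms: "terms_eval (pexpr_terms e) v = pexpr_eval e v"
  by (induction e)
    (simp_all add: terms_eval_append terms_eval_mult, simp_all add: terms_eval_def monom_eval_def)

lemma terms_vars_pexpr_terms: "terms_vars (pexpr_terms e) \<subseteq> pexpr_vars e"
proof (induction e)
  case (Mul a b)
  then show ?case using terms_vars_mult[of "pexpr_terms a" "pexpr_terms b"] by auto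
qed (auto simp: terms_vars_def)

definition mpoly_of_terms :: "term_list \<Rightarrow> mpoly_nat" where
  "mpoly_of_terms ts = (\<Sum>(c, m)\<leftarrow>ts. Poly_Mapping.single m c)"

lemma mpoly_eval_mpoly_of_terms: "mpoly_eval (mpoly_of_terms ts) v = terms_eval ts v"
  by (induction ts)
    (auto simp: mpoly_of_terms_def terms_eval_def mpoly_eval_add mpoly_eval_single
      mpoly_eval_def[of 0])

lemma mpoly_vars_mpoly_of_terms: "mpoly_vars (mpoly_of_terms ts) \<subseteq> terms_vars ts"
proof (induction ts)
  case Nil
  then show ?case by (simp add: mpoly_of_terms_def mpoly_vars_def)
next
  case (Cons t ts)
  obtain c m where t: "t = (c, m)" by force
  have "mpoly_of_terms (t # ts) = Poly_Mapping.single m c + mpoly_of_terms ts"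
    by (simp add: mpoly_of_terms_def t)
  then show ?case
    using Cons mpoly_vars_add[of "Poly_Mapping.single m c" "mpoly_of_terms ts"]
      mpoly_vars_single[of m c]
    by (auto simp: terms_vars_def t)
qed

lemma pexpr_as_mpoly:
  "\<exists>t. mpoly_vars t \<subseteq> pexpr_vars e \<and> (\<forall>v. mpoly_eval t v = pexpr_eval e v)"
proof (intro exI conjI allI)
  show "mpoly_vars (mpoly_of_terms (pexpr_terms e)) \<subseteq> pexpr_vars e"
    using mpoly_vars_mpoly_of_terms terms_vars_pexpr_terms by (rule order_trans)
  show "mpoly_eval (mpoly_of_terms (pexpr_terms e)) v = pexpr_eval e v" for v
    by (simp only: mpoly_eval_mpoly_of_terms terms_eval_pexpr_terms)
qed

definition child_env :: "ptree list \<Rightarrow> (nat \<Rightarrow> nat) \<Rightarrow> nat \<Rightarrow> nat \<Rightarrow> nat" where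
  "child_env cs l n i = (if i = 0 then n else l (map (\<lambda>c. ptree_sem c l n) cs ! (i - 1)))"

definition node_template :: "pexpr \<Rightarrow> ptree list \<Rightarrow> (nat \<Rightarrow> nat) \<Rightarrow> nat \<Rightarrow> nat" where
  "node_template e cs l n = pexpr_eval e (child_env cs l n)"

definition template_wf :: "pexpr \<Rightarrow> ptree list \<Rightarrow> bool" where
  "template_wf e cs \<longleftrightarrow> pexpr_vars e \<subseteq> {..length cs} \<and> (\<forall>c\<in>set cs. ptree_wf c)"

lemma ptree_sem_PNode: "ptree_sem (PNode t cs) l n = mpoly_eval t (child_env cs l n)"
  by (simp add: child_env_def[abs_def])

lemma node_template_described:
  assumes "template_wf e cs"
  shows "\<exists>T. is_description T (node_template e cs)"
proof -
  obtain t where vars: "mpoly_vars t \<subseteq> pexpr_vars e" and eval: "\<forall>v. mpoly_eval t v = pexpr_eval e v"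
    using pexpr_as_mpoly by blast
  have "is_description (PNode t cs) (node_template e cs)"
    using assms vars eval
    by (auto simp del: ptree_sem.simps
        simp: is_description_def template_wf_def node_template_def ptree_sem_PNode fun_eq_iff)
  then show ?thesis ..
qed

lemma child_env_append_left:
  "i \<le> length cs \<Longrightarrow> child_env (cs @ ds) l n i = child_env cs l n i"
  by (cases i) (simp_all add: child_env_def nth_append)

lemma child_env_append_right:
  "child_env (cs @ ds) l n (if i = 0 then 0 else i + length cs) = child_env ds l n i"
  by (cases i) (simp_all add: child_env_def nth_append)

lemma node_templates_common_children:
  assumes "template_wf e cs" and "template_wf f ds"
  obtains e' f' bs where "template_wf e' bs" "template_wf f' bs"
    "node_template e' bs = node_template e cs" "node_template f' bs = node_template f ds"
proof
  define shift where "shift i = (if i = 0 then 0 else i + length cs)" for i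
  show "template_wf e (cs @ ds)" "template_wf (pexpr_rename shift f) (cs @ ds)"
    using assms by (auto simp: template_wf_def pexpr_vars_rename shift_def)
  show "node_template e (cs @ ds) = node_template e cs"
    using assms(1) unfolding template_wf_def node_template_def fun_eq_iff
    by (auto intro!: pexpr_eval_cong simp: child_env_append_left)
  show "node_template (pexpr_rename shift f) (cs @ ds) = node_template f ds"
    unfolding node_template_def pexpr_eval_rename fun_eq_iff comp_def shift_def
    by (simp only: child_env_append_right, simp)
qed

definition node_expressible :: "((nat \<Rightarrow> nat) \<Rightarrow> nat \<Rightarrow> nat) \<Rightarrow> bool" where
  "node_expressible P \<longleftrightarrow> (\<exists>e cs. template_wf e cs \<and> P = node_template e cs)"

lemma node_expressible_described: "node_expressible P \<Longrightarrow> \<exists>T. is_description T P"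
  unfolding node_expressible_def using node_template_described by blast

lemma node_expressible_binop:
  assumes "node_expressible P" and "node_expressible Q"
    and op: "\<And>a b v. pexpr_eval (op a b) v = f (pexpr_eval a v) (pexpr_eval b v)"
    and op_vars: "\<And>a b. pexpr_vars (op a b) = pexpr_vars a \<union> pexpr_vars b"
  shows "node_expressible (\<lambda>l n. f (P l n) (Q l n))"
proof -
  obtain e cs f' ds where "template_wf e cs" "P = node_template e cs"
    "template_wf f' ds" "Q = node_template f' ds"
    using assms(1,2) unfolding node_expressible_def by blast
  then obtain a b bs where wf: "template_wf a bs" "template_wf b bs"
    and PQ: "P = node_template a bs" "Q = node_template b bs"
    by (metis node_templates_common_children)
  have "template_wf (op a b) bs"
    using wf by (auto simp: template_wf_def op_vars)
  moreover have "(\<lambda>l n. f (P l n) (Q l n)) = node_template (op a b) bs"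
    by (simp add: PQ node_template_def op fun_eq_iff)
  ultimately show ?thesis unfolding node_expressible_def by blast
qed

lemma SOP_node_expressible: "P \<in> SOP \<Longrightarrow> node_expressible P"
proof (induction rule: SOP.induct)
  case (const p)
  obtain e where "pexpr_vars e \<subseteq> {0}" "\<forall>v. pexpr_eval e v = poly p (v 0)"
    using poly_as_pexpr by blast
  then have "template_wf e []" "(\<lambda>l n. poly p n) = node_template e []"
    by (auto simp: template_wf_def node_template_def child_env_def fun_eq_iff)
  then show ?case unfolding node_expressible_def by blast
next
  case (add P Q)
  from add.IH show ?case by (rule node_expressible_binop[where op = Add and f = "(+)"]) simp_all
next
  case (mult P Q)
  from mult.IH show ?case by (rule node_expressible_binop[where op = Mul and f = "(*)"]) simp_all
next
  case (lift P)
  obtain T where "is_description T P"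
    using lift.IH node_expressible_described by blast
  then have "template_wf (Var 1) [T]" "(\<lambda>l n. l (P l n)) = node_template (Var 1) [T]"
    by (auto simp: is_description_def template_wf_def node_template_def child_env_def fun_eq_iff)
  then show ?case unfolding node_expressible_def by blast
qed

theorem mainTheorem3:
  fixes P :: "(nat \<Rightarrow> nat) \<Rightarrow> nat \<Rightarrow> nat"
  assumes "P \<in> SOP"
  shows "\<exists>T. is_description T P"
  using assms by (intro node_expressible_described SOP_node_expressible)

end
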